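(* Under the hypotheses of Theorem 2 (A1, A2, A3(D), $\beta\in[0,1)$, $0<\eta<2N/(\sigma_{\max}^2H_{\ell^{-1}(N\mathcal{L}(w(1)))})$), the GDM iterates satisfy $$\sum_{t=1}^\infty\|w(t+1)-w(t)\|^2<\infty\quad\text{and}\quad\|w(t)\|=O(\sqrt t).$$
   Context: Setting. The data are $S=\{x_1,\dots,x_N\}\subset\mathbb{R}^d$, with labels absorbed. The empirical loss is $\mathcal{L}(w)=\frac1N\sum_i\ell(\langle w,x_i\rangle)$. $\sigma_{\max}$ is the spectral norm of $(x_1,\dots,x_N)$. A1: there is $w$ with $\langle w,x_i\rangle>0$ for all $i$. A2: $\ell$ is differentiable, $\ell'<0$, $\ell(x),\ell'(x)\to0$ as $x\to\infty$, and $\limsup_{x\to-\infty}\ell'(x)<0$. There are positive $\mu_\pm,x_\pm$ with $-\ell'(x)\le(1+e^{-\mu_+x})e^{-x}$ for $x>x_+$ and $-\ell'(x)\ge(1-e^{-\mu_-x})e^{-x}$ for $x>x_-$. $\ell^{-1}$ is the inverse of $\ell:\mathbb{R}\to(0,\infty)$. A3(D): $H_{s_0}$ is the smallest constant with $|\ell'(x)-\ell'(y)|\le H_{s_0}|x-y|$ for $x,y\ge s_0$ (finite for every $s_0$). GDM: $m(0)=0$, $m(t)=\beta m(t-1)+(1-\beta)\nabla\mathcal{L}(w(t))$, $w(t+1)=w(t)-\eta m(t)$ for $t\ge1$, from an arbitrary $w(1)$. *)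

theory Defs
  imports "HOL-Analysis.Analysis" "HOL-Library.Landau_Symbols" "HOL-Library.Liminf_Limsup"
begin

definition emp_loss :: "(real \<Rightarrow> real) \<Rightarrow> nat \<Rightarrow> (nat \<Rightarrow> 'a::real_inner) \<Rightarrow> 'a \<Rightarrow> real" where
  "emp_loss l N x w = (1 / real N) * (\<Sum>i<N. l (inner w (x i)))"

definition emp_grad :: "(real \<Rightarrow> real) \<Rightarrow> nat \<Rightarrow> (nat \<Rightarrow> 'a::real_inner) \<Rightarrow> 'a \<Rightarrow> 'a" where
  "emp_grad l N x w = (1 / real N) *\<^sub>R (\<Sum>i<N. deriv l (inner w (x i)) *\<^sub>R x i)"

text \<open>Spectral norm of the d x N data matrix (x_1,...,x_N): the operator norm
  sup { || sum_i v_i x_i || : ||v||_2 <= 1 }.\<close>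
definition sigma_max :: "nat \<Rightarrow> (nat \<Rightarrow> 'a::real_normed_vector) \<Rightarrow> real" where
  "sigma_max N x = Sup {norm (\<Sum>i<N. v i *\<^sub>R x i) | v. (\<Sum>i<N. (v i)\<^sup>2) \<le> 1}"

definition lip_const :: "(real \<Rightarrow> real) \<Rightarrow> real \<Rightarrow> real" where
  "lip_const l s0 = Sup {\<bar>deriv l x - deriv l y\<bar> / \<bar>x - y\<bar> | x y. s0 \<le> x \<and> s0 \<le> y \<and> x \<noteq> y}"

definition loss_inv :: "(real \<Rightarrow> real) \<Rightarrow> real \<Rightarrow> real" where
  "loss_inv l y = (THE x. l x = y)"

end

theory Submission
  imports Defs
begin

text \<open>Let \<open>s0 = \<ell>\<^sup>-\<^sup>1(N L(w 1))\<close>. On the polyhedron of points all of whose margins are at least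
  \<open>s0\<close>, \<open>\<ell>'\<close> is \<open>H\<close>-Lipschitz and hence \<open>L\<close> is \<open>H \<sigma>\<^sub>m\<^sub>a\<^sub>x\<^sup>2 / N\<close>-smooth; every point of the
  sublevel set \<open>{L \<le> L(w 1)}\<close> lies in it. There the heavy-ball step decreases the Lyapunov
  function \<open>E(t) = L(w t) + \<eta>\<beta>/(2(1-\<beta>)) \<parallel>m(t-1)\<parallel>\<^sup>2\<close> by a fixed multiple of \<open>\<parallel>m t\<parallel>\<^sup>2\<close>.
  Conversely, \<open>E(t) \<le> L(w 1)\<close> keeps \<open>w(t+1)\<close> in the polyhedron: along the step, the descent
  bound keeps \<open>L\<close> strictly below \<open>L(w 1)\<close> before any margin could reach \<open>s0\<close>. Summing the
  decrease bounds \<open>\<Sum> \<parallel>w(t+1) - w t\<parallel>\<^sup>2\<close>, and Cauchy-Schwarz turns this into \<open>\<parallel>w t\<parallel> = O(\<surd>t)\<close>.\<close>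

lemma filterlim_at_top_at_bot_if_Limsup_deriv_neg:
  fixes f :: "real \<Rightarrow> real"
  assumes D: "\<And>s. DERIV f s :> deriv f s"
    and Limsup_neg: "Limsup at_bot (\<lambda>s. ereal (deriv f s)) < 0"
  shows "filterlim f at_top at_bot"
proof -
  obtain z where z: "Limsup at_bot (\<lambda>s. ereal (deriv f s)) < z" "z < 0"
    using Limsup_neg dense by blast
  obtain r where r: "z = ereal r" "r < 0"
    using z by (cases z) auto
  obtain R where R: "\<And>s. s \<le> R \<Longrightarrow> deriv f s < r"
    using Limsup_lessD[OF z(1)] r by (auto simp: eventually_at_bot_linorder)
  have linear_growth: "f R + (- r) * (R - s) \<le> f s" if "s \<le> R" for s
  proof (cases "s = R")
    case False
    with that have "s < R" by simp
    then obtain \<xi> where \<xi>: "s < \<xi>" "\<xi> < R" "f R - f s = (R - s) * deriv f \<xi>"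
      using MVT2[of s R f "deriv f"] D by blast
    have "(R - s) * deriv f \<xi> \<le> (R - s) * r"
      using R[of \<xi>] \<xi> by (intro mult_left_mono) auto
    with \<xi>(3) show ?thesis by (simp add: algebra_simps)
  qed simp
  show ?thesis
    unfolding filterlim_at_top eventually_at_bot_linorder
  proof (intro allI exI impI)
    fix Z s assume s: "s \<le> min R (R - (\<bar>Z\<bar> + \<bar>f R\<bar>) / (- r))"
    have "\<bar>Z\<bar> + \<bar>f R\<bar> \<le> (- r) * (R - s)"
      using s r by (simp add: field_simps)
    then show "Z \<le> f s"
      using linear_growth[of s] s by linarith
  qed
qed

lemma ex_eq_if_filterlim_at_bot_tendsto_zero:
  fixes f :: "real \<Rightarrow> real"
  assumes cont: "\<And>s. isCont f s"
    and at_bot: "filterlim f at_top at_bot"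
    and at_top: "(f \<longlongrightarrow> 0) at_top"
    and y: "0 < y"
  shows "\<exists>s. f s = y"
proof -
  obtain a where a: "y \<le> f a"
  proof -
    obtain A where "\<And>s. s \<le> A \<Longrightarrow> y \<le> f s"
      using at_bot unfolding filterlim_at_top eventually_at_bot_linorder by blast
    then show ?thesis using that by blast
  qed
  obtain b where b: "a \<le> b" "f b \<le> y"
  proof -
    obtain B where "\<And>s. B \<le> s \<Longrightarrow> f s < y"
      using order_tendstoD(2)[OF at_top y] by (auto simp: eventually_at_top_linorder)
    then show ?thesis
      using that[of "max a B"] by (simp add: less_imp_le)
  qed
  show ?thesis
    using IVT2[of f b y a] a b cont by blast
qed

lemma loss_inv_eqI:
  assumes "inj l" "l s = y"
  shows "loss_inv l y = s"
  unfolding loss_inv_def by (rule the_equality) (use assms in \<open>auto simp: inj_def\<close>)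

lemma deriv_lipschitz_lip_const:
  assumes bdd: "bdd_above {\<bar>deriv l a - deriv l b\<bar> / \<bar>a - b\<bar> | a b. s0 \<le> a \<and> s0 \<le> b \<and> a \<noteq> b}"
    and "s0 \<le> u" "s0 \<le> v"
  shows "\<bar>deriv l u - deriv l v\<bar> \<le> lip_const l s0 * \<bar>u - v\<bar>"
proof (cases "u = v")
  case False
  have "\<bar>deriv l u - deriv l v\<bar> / \<bar>u - v\<bar> \<le> lip_const l s0"
    unfolding lip_const_def by (rule cSup_upper) (use assms False in auto)
  with False show ?thesis by (simp add: pos_divide_le_eq)
qed simp

lemma lipschitz_const_nonneg:
  fixes f :: "real \<Rightarrow> real"
  assumes "\<And>u v. s0 \<le> u \<Longrightarrow> s0 \<le> v \<Longrightarrow> \<bar>f u - f v\<bar> \<le> H * \<bar>u - v\<bar>"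
  shows "0 \<le> H"
proof -
  have "\<bar>f s0 - f (s0 + 1)\<bar> \<le> H"
    using assms[of s0 "s0 + 1"] by simp
  then show ?thesis by linarith
qed

lemma bdd_above_sigma_max:
  fixes x :: "nat \<Rightarrow> 'a::real_normed_vector"
  shows "bdd_above {norm (\<Sum>i<N. v i *\<^sub>R x i) | v. (\<Sum>i<N. (v i)\<^sup>2) \<le> 1}"
proof (rule bdd_aboveI[where M="\<Sum>i<N. norm (x i)"], clarify)
  fix v :: "nat \<Rightarrow> real" assume v: "(\<Sum>i<N. (v i)\<^sup>2) \<le> 1"
  have "\<bar>v i\<bar> \<le> 1" if "i < N" for i
  proof -
    have "(v i)\<^sup>2 \<le> (\<Sum>i<N. (v i)\<^sup>2)"
      using that by (intro member_le_sum) auto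
    with v have "(v i)\<^sup>2 \<le> 1" by linarith
    then show ?thesis by (simp add: abs_square_le_1)
  qed
  then have "(\<Sum>i<N. norm (v i *\<^sub>R x i)) \<le> (\<Sum>i<N. norm (x i))"
    by (intro sum_mono) (auto intro: mult_left_le_one_le)
  then show "norm (\<Sum>i<N. v i *\<^sub>R x i) \<le> (\<Sum>i<N. norm (x i))"
    by (rule order_trans[OF norm_sum])
qed

lemma sum_inner_square_le_sigma_max:
  fixes x :: "nat \<Rightarrow> 'a::real_inner"
  shows "(\<Sum>i<N. (inner u (x i))\<^sup>2) \<le> (sigma_max N x)\<^sup>2 * (norm u)\<^sup>2"
proof -
  define S where "S = (\<Sum>i<N. (inner u (x i))\<^sup>2)"
  have S0: "S \<ge> 0" unfolding S_def by (auto intro: sum_nonneg)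
  show ?thesis
  proof (cases "S = 0")
    case True then show ?thesis by (simp add: S_def[symmetric])
  next
    case False
    with S0 have S_pos: "S > 0" by simp
    define v where "v i = inner u (x i) / sqrt S" for i
    have "(\<Sum>i<N. (v i)\<^sup>2) = 1"
      unfolding v_def using S_pos by (simp add: power_divide S_def flip: sum_divide_distrib)
    then have le_sigma: "norm (\<Sum>i<N. v i *\<^sub>R x i) \<le> sigma_max N x"
      unfolding sigma_max_def by (intro cSup_upper bdd_above_sigma_max) auto
    have "inner u (\<Sum>i<N. v i *\<^sub>R x i) = S / sqrt S"
      unfolding v_def S_def by (simp add: inner_sum_right sum_divide_distrib power2_eq_square)
    also have "\<dots> = sqrt S" using S_pos by (simp add: real_div_sqrt)
    finally have "sqrt S \<le> norm u * norm (\<Sum>i<N. v i *\<^sub>R x i)"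
      using Cauchy_Schwarz_ineq2[of u "\<Sum>i<N. v i *\<^sub>R x i"] by simp
    also have "\<dots> \<le> norm u * sigma_max N x" by (intro mult_left_mono le_sigma) auto
    finally have "(sqrt S)\<^sup>2 \<le> (norm u * sigma_max N x)\<^sup>2"
      using S0 by (intro power_mono) auto
    then show ?thesis using S0 by (simp add: S_def power_mult_distrib mult.commute)
  qed
qed

definition margin_set :: "nat \<Rightarrow> (nat \<Rightarrow> 'a::real_inner) \<Rightarrow> real \<Rightarrow> 'a set" where
  "margin_set N x s0 = {p. \<forall>i<N. s0 \<le> inner p (x i)}"

lemma convex_margin_set: "convex (margin_set N x s0)"
proof (rule convexI)
  fix p q :: 'a and u v :: real
  assume p: "p \<in> margin_set N x s0" and q: "q \<in> margin_set N x s0"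
    and uv: "0 \<le> u" "0 \<le> v" "u + v = 1"
  have "s0 \<le> u * inner p (x i) + v * inner q (x i)" if i: "i < N" for i
  proof -
    have "u * s0 + v * s0 \<le> u * inner p (x i) + v * inner q (x i)"
      using p q uv i unfolding margin_set_def by (intro add_mono mult_left_mono) auto
    then show ?thesis using uv(3) by (simp add: distrib_right[symmetric])
  qed
  then show "u *\<^sub>R p + v *\<^sub>R q \<in> margin_set N x s0"
    unfolding margin_set_def by (simp add: inner_add_left)
qed

lemma segment_in_margin_set:
  assumes "p \<in> margin_set N x s0" "q \<in> margin_set N x s0" "0 \<le> s" "s \<le> 1"
  shows "p + s *\<^sub>R (q - p) \<in> margin_set N x s0"
proof -
  have "(1 - s) *\<^sub>R p + s *\<^sub>R q \<in> margin_set N x s0"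
    using convex_margin_set assms unfolding convex_alt by blast
  then show ?thesis by (simp add: algebra_simps)
qed

lemma margin_set_exit_point:
  fixes p d :: "'a::real_inner"
  assumes p: "p \<in> margin_set N x s0" and exit: "p + d \<notin> margin_set N x s0"
  obtains s i where "0 \<le> s" "s < 1" "i < N" "p + s *\<^sub>R d \<in> margin_set N x s0"
    "inner (p + s *\<^sub>R d) (x i) = s0" "inner d (x i) < 0"
proof -
  define a where "a i = inner p (x i)" for i
  define e where "e i = inner d (x i)" for i
  define B where "B = {i. i < N \<and> a i + e i < s0}"
  define hit where "hit i = (s0 - a i) / e i" for i
  have a_ge: "s0 \<le> a i" if "i < N" for i
    using p that unfolding margin_set_def a_def by simp
  have "B \<noteq> {}"
    using exit unfolding B_def margin_set_def a_def e_def by (auto simp: inner_add_left not_le)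
  moreover have "finite B" unfolding B_def by simp
  ultimately have "Min (hit ` B) \<in> hit ` B" by simp
  then obtain i where i: "i \<in> B" "hit i = Min (hit ` B)" by auto
  have i_min: "hit i \<le> hit j" if "j \<in> B" for j
    unfolding i(2) using \<open>finite B\<close> that by simp
  have e_neg: "e j < 0" if "j \<in> B" for j
    using that a_ge unfolding B_def by force
  have hit_eq: "a j + hit j * e j = s0" if "j \<in> B" for j
    using e_neg[OF that] unfolding hit_def by simp
  have "0 \<le> hit i" "hit i < 1"
    using e_neg[OF i(1)] a_ge[of i] i(1) unfolding hit_def B_def by (auto simp: divide_nonpos_neg divide_less_eq)
  moreover have "i < N" using i(1) unfolding B_def by simp
  moreover have "p + hit i *\<^sub>R d \<in> margin_set N x s0"
    unfolding margin_set_def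
  proof (intro CollectI allI impI)
    fix j assume j: "j < N"
    have "s0 \<le> a j + hit i * e j"
    proof (cases "j \<in> B")
      case True
      have "hit j * e j \<le> hit i * e j"
        using i_min[OF True] e_neg[OF True] by (intro mult_right_mono_neg) auto
      then show ?thesis using hit_eq[OF True] by simp
    next
      case False
      with j have "s0 \<le> a j + e j" unfolding B_def by auto
      then have "(1 - hit i) * s0 + hit i * s0 \<le> (1 - hit i) * a j + hit i * (a j + e j)"
        using a_ge[OF j] \<open>0 \<le> hit i\<close> \<open>hit i < 1\<close> by (intro add_mono mult_left_mono) auto
      then show ?thesis by (simp add: algebra_simps)
    qed
    then show "s0 \<le> inner (p + hit i *\<^sub>R d) (x j)"
      unfolding a_def e_def by (simp add: inner_add_left)
  qed
  moreover have "inner (p + hit i *\<^sub>R d) (x i) = s0"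
    using hit_eq[OF i(1)] unfolding a_def e_def by (simp add: inner_add_left)
  ultimately show ?thesis
    using that e_neg[OF i(1)] unfolding e_def by blast
qed

lemma emp_loss_along_line_DERIV:
  assumes D: "\<And>s. DERIV l s :> deriv l s"
  shows "((\<lambda>s. emp_loss l N x (p + s *\<^sub>R v)) has_real_derivative
           inner (emp_grad l N x (p + s *\<^sub>R v)) v) (at s)"
proof -
  have "((\<lambda>s. inner (p + s *\<^sub>R v) (x i)) has_real_derivative inner (x i) v) (at s)" for i
    unfolding inner_add_left inner_scaleR_left by (auto intro!: derivative_eq_intros simp: inner_commute)
  then have "((\<lambda>s. l (inner (p + s *\<^sub>R v) (x i))) has_real_derivative
          deriv l (inner (p + s *\<^sub>R v) (x i)) * inner (x i) v) (at s)" for i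
    by (rule DERIV_chain2[OF D])
  then have "((\<lambda>s. (1 / N) * (\<Sum>i<N. l (inner (p + s *\<^sub>R v) (x i)))) has_real_derivative
          (1 / N) * (\<Sum>i<N. deriv l (inner (p + s *\<^sub>R v) (x i)) * inner (x i) v)) (at s)"
    by (intro DERIV_cmult DERIV_sum)
  then show ?thesis
    unfolding emp_loss_def emp_grad_def by (simp add: inner_sum_left)
qed

lemma inner_emp_grad_diff_le:
  fixes x :: "nat \<Rightarrow> 'a::real_inner"
  assumes lip: "\<And>u v. s0 \<le> u \<Longrightarrow> s0 \<le> v \<Longrightarrow> \<bar>deriv l u - deriv l v\<bar> \<le> H * \<bar>u - v\<bar>"
    and p: "p \<in> margin_set N x s0" and q: "q \<in> margin_set N x s0"
  shows "inner (emp_grad l N x q - emp_grad l N x p) (q - p)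
           \<le> H * (sigma_max N x)\<^sup>2 / N * (norm (q - p))\<^sup>2"
proof -
  define e where "e i = inner (q - p) (x i)" for i
  have term_le: "(deriv l (inner q (x i)) - deriv l (inner p (x i))) * e i \<le> H * (e i)\<^sup>2"
    if "i < N" for i
  proof -
    have "(deriv l (inner q (x i)) - deriv l (inner p (x i))) * e i
          \<le> \<bar>deriv l (inner q (x i)) - deriv l (inner p (x i))\<bar> * \<bar>e i\<bar>"
      by (metis abs_ge_self abs_mult)
    also have "\<dots> \<le> H * \<bar>e i\<bar> * \<bar>e i\<bar>"
      using p q that lip[of "inner q (x i)" "inner p (x i)"]
      unfolding margin_set_def e_def by (intro mult_right_mono) (auto simp: inner_diff_left)
    finally show ?thesis by (simp add: power2_eq_square mult.assoc)
  qed
  have "emp_grad l N x q - emp_grad l N x p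
        = (1 / N) *\<^sub>R (\<Sum>i<N. (deriv l (inner q (x i)) - deriv l (inner p (x i))) *\<^sub>R x i)"
    unfolding emp_grad_def by (simp add: sum_subtractf scaleR_diff_left scale_right_diff_distrib)
  then have "inner (emp_grad l N x q - emp_grad l N x p) (q - p)
        = (1 / N) * (\<Sum>i<N. (deriv l (inner q (x i)) - deriv l (inner p (x i))) * e i)"
    unfolding e_def by (simp add: inner_sum_right inner_commute)
  also have "\<dots> \<le> (1 / N) * (\<Sum>i<N. H * (e i)\<^sup>2)"
    using term_le by (intro mult_left_mono sum_mono) auto
  also have "\<dots> = (1 / N) * (H * (\<Sum>i<N. (e i)\<^sup>2))"
    by (simp add: sum_distrib_left)
  also have "\<dots> \<le> (1 / N) * (H * ((sigma_max N x)\<^sup>2 * (norm (q - p))\<^sup>2))"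
    using lipschitz_const_nonneg[OF lip] sum_inner_square_le_sigma_max[where u="q - p"]
    unfolding e_def by (intro mult_left_mono) auto
  finally show ?thesis by simp
qed

lemma emp_loss_descent:
  fixes x :: "nat \<Rightarrow> 'a::real_inner"
  assumes D: "\<And>s. DERIV l s :> deriv l s"
    and lip: "\<And>u v. s0 \<le> u \<Longrightarrow> s0 \<le> v \<Longrightarrow> \<bar>deriv l u - deriv l v\<bar> \<le> H * \<bar>u - v\<bar>"
    and p: "p \<in> margin_set N x s0" and q: "q \<in> margin_set N x s0"
  shows "emp_loss l N x q \<le> emp_loss l N x p + inner (emp_grad l N x p) (q - p)
           + H * (sigma_max N x)\<^sup>2 / N / 2 * (norm (q - p))\<^sup>2"
proof -
  define K where "K = H * (sigma_max N x)\<^sup>2 / N"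
  define v where "v = q - p"
  define g where "g s = emp_grad l N x (p + s *\<^sub>R v)" for s
  define \<psi> where "\<psi> s = emp_loss l N x (p + s *\<^sub>R v) - s * inner (g 0) v - K / 2 * s\<^sup>2 * (norm v)\<^sup>2" for s
  have \<psi>_deriv: "DERIV \<psi> s :> inner (g s) v - inner (g 0) v - K * s * (norm v)\<^sup>2" for s
    unfolding \<psi>_def g_def
    by (auto intro!: derivative_eq_intros emp_loss_along_line_DERIV[OF D] simp: power2_eq_square)
  have \<psi>_deriv_nonpos: "inner (g s) v - inner (g 0) v - K * s * (norm v)\<^sup>2 \<le> 0"
    if "0 \<le> s" "s \<le> 1" for s
  proof (cases "s = 0")
    case False
    with that have s: "0 < s" by simp
    have z: "p + s *\<^sub>R v \<in> margin_set N x s0"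
      using segment_in_margin_set[OF p q that] unfolding v_def .
    have "s * (inner (g s) v - inner (g 0) v) = inner (g s - g 0) ((p + s *\<^sub>R v) - p)"
      by (simp add: inner_diff_left algebra_simps)
    also have "\<dots> \<le> K * (norm ((p + s *\<^sub>R v) - p))\<^sup>2"
      using inner_emp_grad_diff_le[OF lip z p] unfolding g_def K_def by (simp add: inner_diff_left right_diff_distrib)
    also have "\<dots> = s * (K * s * (norm v)\<^sup>2)"
      using s by (simp add: power2_eq_square)
    finally show ?thesis using s by (simp add: mult_le_cancel_left_pos)
  qed simp
  have "\<psi> 1 \<le> \<psi> 0"
  proof (rule DERIV_nonpos_imp_nonincreasing[of 0 1 \<psi>])
    fix s :: real assume "0 \<le> s" "s \<le> 1"
    then show "\<exists>y. DERIV \<psi> s :> y \<and> y \<le> 0"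
      using \<psi>_deriv \<psi>_deriv_nonpos by blast
  qed simp
  then show ?thesis
    unfolding \<psi>_def K_def v_def g_def by simp
qed

lemma momentum_step_inequality:
  fixes g m0 m1 :: "'a::real_inner"
  assumes beta: "0 \<le> \<beta>" "\<beta> < 1" and eta: "0 < \<eta>"
    and momentum: "(1 - \<beta>) *\<^sub>R g = m1 - \<beta> *\<^sub>R m0"
  shows "inner g (- \<eta> *\<^sub>R m1) + K / 2 * (norm (\<eta> *\<^sub>R m1))\<^sup>2
         \<le> \<eta> * \<beta> / (2 * (1 - \<beta>)) * ((norm m0)\<^sup>2 - (norm m1)\<^sup>2) - \<eta> * (1 - K * \<eta> / 2) * (norm m1)\<^sup>2"
proof -
  have momentum_inner: "(1 - \<beta>) * inner g m1 = (norm m1)\<^sup>2 - \<beta> * inner m0 m1"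
    using arg_cong[OF momentum, of "\<lambda>u. inner u m1"]
    by (simp add: inner_diff_left power2_norm_eq_inner)
  have "2 * inner m0 m1 \<le> (norm m0)\<^sup>2 + (norm m1)\<^sup>2"
  proof -
    have "0 \<le> (norm (m0 - m1))\<^sup>2" by simp
    also have "\<dots> = (norm m0)\<^sup>2 - 2 * inner m0 m1 + (norm m1)\<^sup>2"
      by (simp add: power2_norm_eq_inner inner_diff_left inner_diff_right inner_commute)
    finally show ?thesis by simp
  qed
  then have "\<beta> * (2 * inner m0 m1) \<le> \<beta> * ((norm m0)\<^sup>2 + (norm m1)\<^sup>2)"
    using beta(1) by (rule mult_left_mono)
  then have "(1 - \<beta> / 2) * (norm m1)\<^sup>2 - \<beta> / 2 * (norm m0)\<^sup>2 \<le> (1 - \<beta>) * inner g m1"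
    unfolding momentum_inner by (simp add: algebra_simps)
  then have lower: "((1 - \<beta> / 2) * (norm m1)\<^sup>2 - \<beta> / 2 * (norm m0)\<^sup>2) / (1 - \<beta>) \<le> inner g m1"
    using beta by (simp add: pos_divide_le_eq mult.commute)
  have "inner g (- \<eta> *\<^sub>R m1) \<le> - \<eta> * (((1 - \<beta> / 2) * (norm m1)\<^sup>2 - \<beta> / 2 * (norm m0)\<^sup>2) / (1 - \<beta>))"
    using mult_left_mono[OF lower, of \<eta>] eta by simp
  also have "\<dots> + K / 2 * (norm (\<eta> *\<^sub>R m1))\<^sup>2
      = \<eta> * \<beta> / (2 * (1 - \<beta>)) * ((norm m0)\<^sup>2 - (norm m1)\<^sup>2) - \<eta> * (1 - K * \<eta> / 2) * (norm m1)\<^sup>2"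
    using beta eta by (simp add: divide_simps power_mult_distrib) (simp add: algebra_simps power2_eq_square)
  finally show ?thesis by simp
qed

lemma norm_bigo_sqrt_if_square_increments_bounded:
  fixes w :: "nat \<Rightarrow> 'a::real_normed_vector"
  assumes bound: "\<And>n. (\<Sum>k<n. (norm (w (k + 2) - w (k + 1)))\<^sup>2) \<le> B"
  shows "(\<lambda>t. norm (w t)) \<in> O(\<lambda>t. sqrt (real t))"
proof -
  have B: "0 \<le> B" using bound[of 0] by simp
  define C where "C = norm (w 1) + sqrt B"
  have norm_le: "norm (w (n + 1)) \<le> C * sqrt (real (n + 1))" for n
  proof -
    define a where "a k = norm (w (k + 2) - w (k + 1))" for k
    have "(\<Sum>k<n. a k)\<^sup>2 \<le> (\<Sum>k<n. (a k)\<^sup>2) * n"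
      using sum_squared_le_sum_of_squares[of a "{..<n}"] by simp
    also have "\<dots> \<le> B * n"
      using bound[of n] unfolding a_def by (intro mult_right_mono) auto
    also have "\<dots> \<le> B * (n + 1)"
      using B by (intro mult_left_mono) auto
    finally have "(\<Sum>k<n. a k) \<le> sqrt (B * (n + 1))"
      by (rule real_le_rsqrt)
    then have sum_le: "(\<Sum>k<n. a k) \<le> sqrt B * sqrt (real (n + 1))"
      by (simp add: real_sqrt_mult)
    have "w (n + 1) = w 1 + (\<Sum>k<n. w (k + 2) - w (k + 1))"
      using sum_lessThan_telescope[of "\<lambda>k. w (k + 1)" n] by simp
    then have "norm (w (n + 1)) \<le> norm (w 1) + (\<Sum>k<n. a k)"
      unfolding a_def by (auto intro: order_trans[OF norm_triangle_ineq add_left_mono[OF norm_sum]])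
    also have "\<dots> \<le> norm (w 1) * sqrt (real (n + 1)) + sqrt B * sqrt (real (n + 1))"
      using sum_le mult_left_mono[of 1 "sqrt (real (n + 1))" "norm (w 1)"] by simp
    finally show ?thesis unfolding C_def by (simp add: algebra_simps)
  qed
  show ?thesis
  proof (rule bigoI[where c = C], unfold eventually_at_top_linorder, intro exI allI impI)
    fix t :: nat assume "1 \<le> t"
    then show "norm (norm (w t)) \<le> C * norm (sqrt (real t))"
      using norm_le[of "t - 1"] by simp
  qed
qed

locale gdm =
  fixes x :: "nat \<Rightarrow> 'a::real_inner" and N :: nat and l :: "real \<Rightarrow> real"
    and \<beta> \<eta> :: real and w m :: "nat \<Rightarrow> 'a" and s0 H :: real
  assumes N_pos: "0 < N"
    and l_DERIV: "\<And>s. DERIV l s :> deriv l s"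
    and deriv_neg: "\<And>s. deriv l s < 0"
    and l_pos: "\<And>s. 0 < l s"
    and level: "l s0 = N * emp_loss l N x (w 1)"
    and lipschitz: "\<And>u v. s0 \<le> u \<Longrightarrow> s0 \<le> v \<Longrightarrow> \<bar>deriv l u - deriv l v\<bar> \<le> H * \<bar>u - v\<bar>"
    and beta: "0 \<le> \<beta>" "\<beta> < 1"
    and eta_pos: "0 < \<eta>"
    and step_size: "\<eta> * H * (sigma_max N x)\<^sup>2 < 2 * N"
    and m0: "m 0 = 0"
    and momentum: "\<And>t. 1 \<le> t \<Longrightarrow> m t = \<beta> *\<^sub>R m (t - 1) + (1 - \<beta>) *\<^sub>R emp_grad l N x (w t)"
    and update: "\<And>t. 1 \<le> t \<Longrightarrow> w (t + 1) = w t - \<eta> *\<^sub>R m t"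
begin

abbreviation L :: "'a \<Rightarrow> real" where "L \<equiv> emp_loss l N x"

abbreviation S :: "'a set" where "S \<equiv> margin_set N x s0"

text \<open>The slack between \<open>K\<close> and the smoothness constant \<open>H \<sigma>\<^sup>2 / N\<close> makes the descent
  along a nonzero step strict.\<close>
definition K :: real where "K = (H * (sigma_max N x)\<^sup>2 / N + 2 / \<eta>) / 2"

definition \<rho> :: real where "\<rho> = \<eta> * (1 - K * \<eta> / 2)"

definition c :: real where "c = \<eta> * \<beta> / (2 * (1 - \<beta>))"

definition energy :: "nat \<Rightarrow> real" where
  "energy t = L (w t) + c * (norm (m (t - 1)))\<^sup>2"

lemma smoothness_le_K: "H * (sigma_max N x)\<^sup>2 / N \<le> K"
  and K_pos: "0 < K"
  and \<rho>_pos: "0 < \<rho>"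
proof -
  define h where "h = H * (sigma_max N x)\<^sup>2 / N"
  have "0 \<le> H" by (rule lipschitz_const_nonneg[OF lipschitz])
  then have h_nonneg: "0 \<le> h" unfolding h_def by simp
  have "\<eta> * h < 2"
    using step_size N_pos unfolding h_def by (simp add: field_simps)
  then have h_lt: "h < 2 / \<eta>"
    using eta_pos by (simp add: field_simps)
  have K_eq: "K = (h + 2 / \<eta>) / 2" unfolding K_def h_def ..
  show "H * (sigma_max N x)\<^sup>2 / N \<le> K"
    using h_lt unfolding K_eq h_def[symmetric] by simp
  have "0 < 2 / \<eta>" using eta_pos by simp
  then show "0 < K"
    using add_nonneg_pos[OF h_nonneg] unfolding K_eq by simp
  have "\<eta> * K = (\<eta> * h + 2) / 2"
    using eta_pos unfolding K_eq by (simp add: field_simps)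
  then have "\<eta> * K < 2" using \<open>\<eta> * h < 2\<close> by simp
  then show "0 < \<rho>"
    unfolding \<rho>_def using eta_pos by (simp add: field_simps)
qed

lemma c_nonneg: "0 \<le> c"
  unfolding c_def using beta eta_pos by simp

lemma l_strict_decreasing: "a < b \<Longrightarrow> l b < l a"
  by (rule DERIV_neg_imp_decreasing) (use l_DERIV deriv_neg in auto)

lemma N_emp_loss: "N * L p = (\<Sum>i<N. l (inner p (x i)))"
  unfolding emp_loss_def using N_pos by simp

lemma l_le_N_emp_loss: "i < N \<Longrightarrow> l (inner p (x i)) \<le> N * L p"
  unfolding N_emp_loss using l_pos by (intro member_le_sum) (auto intro: less_imp_le)

lemma emp_loss_pos: "0 < L p"
proof -
  have "0 < real N * L p"
    using l_le_N_emp_loss[OF N_pos, of p] l_pos[of "inner p (x 0)"] by linarith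
  then show ?thesis using N_pos by (simp add: zero_less_mult_iff)
qed

lemma margin_set_if_sublevel:
  assumes "L p \<le> L (w 1)"
  shows "p \<in> S"
  unfolding margin_set_def
proof (intro CollectI allI impI)
  fix i assume "i < N"
  then have "l (inner p (x i)) \<le> l s0"
    using l_le_N_emp_loss[of i p] assms level by (smt (verit) mult_left_mono of_nat_0_le_iff)
  then show "s0 \<le> inner p (x i)"
    using l_strict_decreasing[of "inner p (x i)" s0] by linarith
qed

lemma sublevel_le_if_margin_eq:
  assumes "i < N" "inner p (x i) = s0"
  shows "L (w 1) \<le> L p"
  using l_le_N_emp_loss[of i p] assms level N_pos by simp

lemma descent:
  assumes "p \<in> S" "q \<in> S"
  shows "L q \<le> L p + inner (emp_grad l N x p) (q - p) + K / 2 * (norm (q - p))\<^sup>2"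
proof -
  have "L q \<le> L p + inner (emp_grad l N x p) (q - p) + H * (sigma_max N x)\<^sup>2 / N / 2 * (norm (q - p))\<^sup>2"
    by (rule emp_loss_descent[OF l_DERIV lipschitz assms])
  also have "\<dots> \<le> L p + inner (emp_grad l N x p) (q - p) + K / 2 * (norm (q - p))\<^sup>2"
    using smoothness_le_K by (intro add_left_mono mult_right_mono) auto
  finally show ?thesis .
qed

lemma step_model_le_energy:
  assumes "1 \<le> t"
  shows "L (w t) + inner (emp_grad l N x (w t)) (w (t + 1) - w t) + K / 2 * (norm (w (t + 1) - w t))\<^sup>2
           + (c + \<rho>) * (norm (m t))\<^sup>2 \<le> energy t"
proof -
  have "(1 - \<beta>) *\<^sub>R emp_grad l N x (w t) = m t - \<beta> *\<^sub>R m (t - 1)"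
    using momentum[OF assms] by simp
  from momentum_step_inequality[OF beta eta_pos this, of K]
  have "inner (emp_grad l N x (w t)) (w (t + 1) - w t) + K / 2 * (norm (w (t + 1) - w t))\<^sup>2
        \<le> c * ((norm (m (t - 1)))\<^sup>2 - (norm (m t))\<^sup>2) - \<rho> * (norm (m t))\<^sup>2"
    using update[OF assms] unfolding c_def \<rho>_def by simp
  then show ?thesis
    unfolding energy_def by (simp add: algebra_simps)
qed

lemma loss_le_energy: "L (w t) \<le> energy t"
  unfolding energy_def using c_nonneg by simp

text \<open>A boundary point of \<open>S\<close> can have energy at most \<open>L (w 1)\<close> only when the momentum
  vanishes and the data consist of a single point, so the step is a plain gradient step,
  which points into \<open>S\<close>.\<close>
lemma boundary_iterate_moves_inward:
  assumes t: "1 \<le> t" and energy: "energy t \<le> L (w 1)"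
    and i: "i < N" and boundary: "inner (w t) (x i) = s0"
  shows "0 \<le> inner (w (t + 1) - w t) (x i)"
proof -
  have L_eq: "L (w t) = L (w 1)"
    using sublevel_le_if_margin_eq[OF i boundary] loss_le_energy[of t] energy by simp
  then have c_momentum: "c * (norm (m (t - 1)))\<^sup>2 \<le> 0"
    using energy unfolding energy_def by simp
  have no_momentum: "\<beta> *\<^sub>R m (t - 1) = 0"
  proof (cases "\<beta> = 0")
    case False
    then have "0 < c" unfolding c_def using beta eta_pos by simp
    with c_momentum have "(norm (m (t - 1)))\<^sup>2 \<le> 0" by (simp add: mult_le_0_iff)
    then show ?thesis by simp
  qed simp
  have N_eq: "N = 1"
  proof (rule ccontr)
    assume "N \<noteq> 1"
    define j where "j = (if i = 0 then 1 else 0 :: nat)"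
    have j: "j < N" "j \<noteq> i" unfolding j_def using N_pos \<open>N \<noteq> 1\<close> by auto
    have "l (inner (w t) (x i)) + l (inner (w t) (x j)) = (\<Sum>k\<in>{i, j}. l (inner (w t) (x k)))"
      using j by simp
    also have "\<dots> \<le> (\<Sum>k<N. l (inner (w t) (x k)))"
      using i j l_pos by (intro sum_mono2) (auto intro: less_imp_le)
    also have "\<dots> = l (inner (w t) (x i))"
      unfolding N_emp_loss[symmetric] L_eq level[symmetric] boundary ..
    finally show False using l_pos[of "inner (w t) (x j)"] by simp
  qed
  with i have "i = 0" by simp
  have "m t = ((1 - \<beta>) * deriv l s0) *\<^sub>R x 0"
    using momentum[OF t] boundary unfolding no_momentum emp_grad_def N_eq \<open>i = 0\<close> by simp
  then have "w (t + 1) - w t = (- \<eta> * (1 - \<beta>) * deriv l s0) *\<^sub>R x 0"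
    using update[OF t] by simp
  moreover have "0 \<le> - \<eta> * (1 - \<beta>) * deriv l s0"
    using eta_pos beta deriv_neg[of s0] by (simp add: mult_nonneg_nonpos less_imp_le)
  ultimately show ?thesis
    unfolding \<open>i = 0\<close> by (simp add: mult_nonpos_nonneg)
qed

lemma next_iterate_in_margin_set:
  assumes t: "1 \<le> t" and energy: "energy t \<le> L (w 1)"
  shows "w (t + 1) \<in> S"
proof (rule ccontr)
  define d where "d = w (t + 1) - w t"
  have wt: "w t \<in> S"
    using margin_set_if_sublevel loss_le_energy[of t] energy by simp
  assume "w (t + 1) \<notin> S"
  then obtain s i where s: "0 \<le> s" "s < 1" and i: "i < N"
    and z: "w t + s *\<^sub>R d \<in> S" "inner (w t + s *\<^sub>R d) (x i) = s0" and d_i: "inner d (x i) < 0"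
    using margin_set_exit_point[OF wt, of d] unfolding d_def by auto
  define G where "G = inner (emp_grad l N x (w t)) d"
  define b where "b = K / 2 * (norm d)\<^sup>2"
  have "d \<noteq> 0" using d_i by auto
  then have b_pos: "0 < b" unfolding b_def using K_pos by simp
  have model: "L (w t) + G + b \<le> L (w 1)"
    using step_model_le_energy[OF t] energy c_nonneg \<rho>_pos unfolding G_def b_def d_def
    by (smt (verit) mult_nonneg_nonneg zero_le_power2)
  have "L (w 1) \<le> L (w t + s *\<^sub>R d)"
    by (rule sublevel_le_if_margin_eq[OF i z(2)])
  also have "\<dots> \<le> L (w t) + s * G + s\<^sup>2 * b"
    using descent[OF wt z(1)] unfolding G_def b_def by (simp add: power_mult_distrib algebra_simps)
  also have "\<dots> = (1 - s) * L (w t) + s * (L (w t) + G + b) - b * s * (1 - s)"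
    by (simp add: algebra_simps power2_eq_square)
  also have "\<dots> \<le> (1 - s) * L (w 1) + s * L (w 1) - b * s * (1 - s)"
    using model loss_le_energy[of t] energy s by (intro diff_right_mono add_mono mult_left_mono) auto
  finally have "b * s * (1 - s) \<le> 0" by (simp add: algebra_simps)
  with b_pos s have "s = 0" by (smt (verit) mult_pos_pos)
  then show False
    using boundary_iterate_moves_inward[OF t energy i] z(2) d_i unfolding d_def by simp
qed

lemma energy_decrease:
  assumes t: "1 \<le> t" and energy: "energy t \<le> L (w 1)"
  shows "energy (t + 1) \<le> energy t - \<rho> * (norm (m t))\<^sup>2"
proof -
  have "w t \<in> S"
    using margin_set_if_sublevel loss_le_energy[of t] energy by simp
  then have "L (w (t + 1)) \<le> L (w t) + inner (emp_grad l N x (w t)) (w (t + 1) - w t)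
      + K / 2 * (norm (w (t + 1) - w t))\<^sup>2"
    using descent next_iterate_in_margin_set[OF t energy] by blast
  then show ?thesis
    using step_model_le_energy[OF t] unfolding energy_def by (simp add: algebra_simps)
qed

lemma energy_plus_sum_le: "energy (n + 1) + \<rho> * (\<Sum>k<n. (norm (m (k + 1)))\<^sup>2) \<le> L (w 1)"
proof (induction n)
  case 0
  then show ?case unfolding energy_def using m0 by simp
next
  case (Suc n)
  have "0 \<le> \<rho> * (\<Sum>k<n. (norm (m (k + 1)))\<^sup>2)"
    using \<rho>_pos by (intro mult_nonneg_nonneg sum_nonneg) auto
  with Suc.IH have "energy (n + 1) \<le> L (w 1)" by linarith
  from energy_decrease[OF _ this] Suc.IH show ?case
    by (simp add: algebra_simps)
qed

lemma sum_square_increments_le: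
  "(\<Sum>k<n. (norm (w (k + 2) - w (k + 1)))\<^sup>2) \<le> \<eta>\<^sup>2 * (L (w 1) / \<rho>)"
proof -
  have "0 \<le> energy (n + 1)"
    using loss_le_energy[of "n + 1"] emp_loss_pos[of "w (n + 1)"] by linarith
  then have "\<rho> * (\<Sum>k<n. (norm (m (k + 1)))\<^sup>2) \<le> L (w 1)"
    using energy_plus_sum_le[of n] by linarith
  then have "(\<Sum>k<n. (norm (m (k + 1)))\<^sup>2) \<le> L (w 1) / \<rho>"
    using \<rho>_pos by (simp add: pos_le_divide_eq mult.commute)
  then have "\<eta>\<^sup>2 * (\<Sum>k<n. (norm (m (k + 1)))\<^sup>2) \<le> \<eta>\<^sup>2 * (L (w 1) / \<rho>)"
    by (rule mult_left_mono) simp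
  moreover have "w (k + 2) - w (k + 1) = - \<eta> *\<^sub>R m (k + 1)" for k
    using update[of "k + 1"] by simp
  ultimately show ?thesis
    using eta_pos by (simp add: power_mult_distrib sum_distrib_left)
qed

end

theorem mainTheorem9:
  fixes x :: "nat \<Rightarrow> 'a::euclidean_space"
    and N :: nat
    and l :: "real \<Rightarrow> real"
    and \<beta> \<eta> :: real
    and w m :: "nat \<Rightarrow> 'a"
  assumes N_pos: "N > 0"
    and A1: "\<exists>u. \<forall>i<N. inner u (x i) > 0"
    and A2_diff: "\<forall>s. l differentiable (at s)"
    and A2_neg: "\<forall>s. deriv l s < 0"
    and A2_lim: "(l \<longlongrightarrow> 0) at_top"
    and A2_dlim: "(deriv l \<longlongrightarrow> 0) at_top"
    and A2_limsup: "Limsup at_bot (\<lambda>s. ereal (deriv l s)) < 0"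
    and A2_upper: "\<exists>\<mu>p xp. \<mu>p > 0 \<and> xp > 0 \<and>
                   (\<forall>s>xp. - deriv l s \<le> (1 + exp (- \<mu>p * s)) * exp (- s))"
    and A2_lower: "\<exists>\<mu>m xm. \<mu>m > 0 \<and> xm > 0 \<and>
                   (\<forall>s>xm. - deriv l s \<ge> (1 - exp (- \<mu>m * s)) * exp (- s))"
    and A3: "\<forall>s0. bdd_above {\<bar>deriv l a - deriv l b\<bar> / \<bar>a - b\<bar> | a b. s0 \<le> a \<and> s0 \<le> b \<and> a \<noteq> b}"
    and beta: "0 \<le> \<beta>" "\<beta> < 1"
    and eta_pos: "0 < \<eta>"
    and eta_bound: "\<eta> < 2 * real N /
          ((sigma_max N x)\<^sup>2 * lip_const l (loss_inv l (real N * emp_loss l N x (w 1))))"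
    and m0: "m 0 = 0"
    and m_step: "\<forall>t\<ge>1. m t = \<beta> *\<^sub>R m (t - 1) + (1 - \<beta>) *\<^sub>R emp_grad l N x (w t)"
    and w_step: "\<forall>t\<ge>1. w (t + 1) = w t - \<eta> *\<^sub>R m t"
  shows "summable (\<lambda>t. (norm (w (t + 2) - w (t + 1)))\<^sup>2)
       \<and> (\<lambda>t. norm (w t)) \<in> O(\<lambda>t. sqrt (real t))"
proof -
  have l_DERIV: "\<And>s. DERIV l s :> deriv l s"
    using A2_diff DERIV_deriv_iff_real_differentiable by blast
  have l_pos: "\<And>s. 0 < l s"
    by (rule DERIV_neg_imp_decreasing_at_top[where flim = 0]) (use l_DERIV A2_neg A2_lim in auto)
  have "inj l"
    by (rule linorder_injI) (metis DERIV_neg_imp_decreasing A2_neg l_DERIV less_irrefl)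
  have "0 < (\<Sum>i<N. l (inner (w 1) (x i)))"
    by (rule sum_pos) (use N_pos l_pos in auto)
  then have "0 < real N * emp_loss l N x (w 1)"
    unfolding emp_loss_def using N_pos by simp
  then obtain s0 where level: "l s0 = real N * emp_loss l N x (w 1)"
    using ex_eq_if_filterlim_at_bot_tendsto_zero[OF DERIV_isCont[OF l_DERIV]
        filterlim_at_top_at_bot_if_Limsup_deriv_neg[OF l_DERIV A2_limsup] A2_lim] by blast
  define H where "H = lip_const l s0"
  have lipschitz: "\<And>u v. s0 \<le> u \<Longrightarrow> s0 \<le> v \<Longrightarrow> \<bar>deriv l u - deriv l v\<bar> \<le> H * \<bar>u - v\<bar>"
    unfolding H_def by (rule deriv_lipschitz_lip_const[OF spec[OF A3]])
  have eta_lt: "\<eta> < 2 * real N / ((sigma_max N x)\<^sup>2 * H)"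
    using eta_bound unfolding loss_inv_eqI[OF \<open>inj l\<close> level] H_def .
  have "0 \<le> (sigma_max N x)\<^sup>2 * H"
    using lipschitz_const_nonneg[OF lipschitz] by simp
  moreover have "(sigma_max N x)\<^sup>2 * H \<noteq> 0"
    using eta_lt eta_pos by (metis div_by_0 less_asym)
  ultimately have "0 < (sigma_max N x)\<^sup>2 * H" by linarith
  then have "\<eta> * ((sigma_max N x)\<^sup>2 * H) < 2 * real N"
    using eta_lt unfolding pos_less_divide_eq[OF \<open>0 < (sigma_max N x)\<^sup>2 * H\<close>] by blast
  then have "\<eta> * H * (sigma_max N x)\<^sup>2 < 2 * N"
    by (simp add: mult_ac)
  then interpret gdm x N l \<beta> \<eta> w m s0 H
    using N_pos l_DERIV A2_neg l_pos level lipschitz beta eta_pos m0 m_step w_step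
    by unfold_locales auto
  show ?thesis
    using summableI_nonneg_bounded[OF _ sum_square_increments_le]
      norm_bigo_sqrt_if_square_increments_bounded[OF sum_square_increments_le] by simp
qed

end
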